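(* Let $p$ be an odd prime, $t,s$ positive integers with $p\nmid s$, $r=p^t$, $q=r^s$. Let $\varphi$ be a nontrivial multiplicative character of $\mathbb{F}_q$, and let $\overline{\varphi}^*$ denote the restriction of $\overline{\varphi}$ to $\mathbb{F}_r^*$. Put $$B=\sum_{x\in\mathbb{F}_q^*,\ \mathrm{Tr}_{q/r}(x+1)=0}\varphi(x).$$ Then $|B|=\sqrt{q}/\sqrt{r}$ if $\overline{\varphi}^*$ is nontrivial, and $|B|=\sqrt{q}/r$ if $\overline{\varphi}^*$ is trivial.
   Context: $\mathrm{Tr}_{q/r}$ is the trace map from $\mathbb{F}_q$ to $\mathbb{F}_r$. A multiplicative character of $\mathbb{F}_q$ is a homomorphism $\mathbb{F}_q^*\to\mathbb{C}^*$; $\overline{\varphi}$ is its complex conjugate; it is trivial if identically $1$. *)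

theory Defs
  imports Complex_Main "HOL-Computational_Algebra.Primes"
begin

text \<open>The finite field F_q is modelled by a finite field type 'a with CARD('a) = q.
The subfield F_r (r = p^t, r^s = q) is the set of fixed points of x \<mapsto> x^r.\<close>

definition subfield_of_order :: "nat \<Rightarrow> 'a::field set" where
  "subfield_of_order r = {x. x ^ r = x}"

definition trace_map :: "nat \<Rightarrow> nat \<Rightarrow> 'a::field \<Rightarrow> 'a" where
  "trace_map r s x = (\<Sum>i<s. x ^ (r ^ i))"

text \<open>A multiplicative character: a homomorphism F_q^* \<rightarrow> C^* (only values on nonzero
elements matter).\<close>
definition mult_char :: "('a::field \<Rightarrow> complex) \<Rightarrow> bool" where
  "mult_char \<phi> \<longleftrightarrow> (\<forall>x y. x \<noteq> 0 \<longrightarrow> y \<noteq> 0 \<longrightarrow> \<phi> (x * y) = \<phi> x * \<phi> y)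
                   \<and> (\<forall>x. x \<noteq> 0 \<longrightarrow> \<phi> x \<noteq> 0)"

definition trivial_char_on :: "'a set \<Rightarrow> ('a \<Rightarrow> complex) \<Rightarrow> bool" where
  "trivial_char_on S \<phi> \<longleftrightarrow> (\<forall>x\<in>S. \<phi> x = 1)"

end

theory Submission
  imports Defs "HOL-Decision_Procs.Algebra_Aux" "HOL-Number_Theory.Residues"
    "HOL-Computational_Algebra.Polynomial" "HOL-Library.Product_Plus"
begin

(* Let c = Tr(-1) = -s, a nonzero element of F_r, so that B is the sum of phi over the trace
   fibre T = Tr^-1(c). Expanding |B|^2 and substituting x = u y gives
   |B|^2 = sum over u <> 0 of phi(u) N(u), with N(u) = #{y in T. u y in T}.
   As Tr is F_r-linear and onto F_r, N(1) = q/r and N(u) = 0 for u in F_r - {0, 1}; for u outside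
   F_r the map y -> (Tr y, Tr (u y)) is onto F_r^2, so N(u) = q/r^2. Since phi sums to 0 over
   F_q - {0}, this gives |B|^2 = q/r - (q/r^2) S with S the sum of phi over F_r - {0}, and S is
   0 or r - 1 according as phi is nontrivial or trivial on F_r - {0}. *)

subsection \<open>Finite fields\<close>

lemma finite_field_power_card:
  fixes x :: "'a::{finite,field}"
  shows "x ^ card (UNIV :: 'a set) = x"
proof (cases "x = 0")
  case False
  have "y \<in> Units cring_class_ops" if "y \<noteq> 0" for y :: 'a
    using that by (auto simp: Units_def class_simps intro!: bexI[of _ "inverse y"])
  then have units: "Units (cring_class_ops :: 'a ring) = UNIV - {0}"
    by (auto simp: Units_def class_simps)
  have "x ^ card (Units (cring_class_ops :: 'a ring)) = 1"
    by (rule cring_class.units_power_order_eq_one) (simp_all add: units False)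
  then have "x ^ (card (UNIV :: 'a set) - 1) = 1"
    by (simp add: units card_Diff_singleton)
  then show ?thesis
    using finite_UNIV_card_ge_0[where 'a='a] by (cases "card (UNIV :: 'a set)") auto
qed (simp add: finite_UNIV_card_ge_0)

lemma CHAR_eq_if_card_eq_prime_power:
  fixes p n :: nat
  assumes "prime p" and "card (UNIV :: 'a::{finite,field} set) = p ^ n"
  shows "CHAR('a) = p"
proof -
  have "prime CHAR('a)"
    using prime_CHAR_semidom[where 'a='a] by (simp add: finite_imp_CHAR_pos)
  moreover have "CHAR('a) dvd p ^ n"
    using CHAR_dvd_CARD[where 'a='a] assms(2) by simp
  ultimately show ?thesis
    using assms(1) prime_dvd_power primes_dvd_imp_eq by blast
qed

lemma card_roots_power_plus_poly_le:
  fixes L :: "'a::field poly"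
  assumes "degree L < n"
  shows "card {x. x ^ n + poly L x = 0} \<le> n"
proof -
  define P where "P = monom 1 n + L"
  have "degree P = n"
    unfolding P_def using assms by (simp add: degree_add_eq_left degree_monom_eq)
  moreover from this assms have "P \<noteq> 0" by auto
  moreover have "poly P x = x ^ n + poly L x" for x
    by (simp add: P_def poly_monom)
  ultimately show ?thesis
    using card_poly_roots_bound[of P] by simp
qed

lemma subfield_of_order_mult:
  "x \<in> subfield_of_order r \<Longrightarrow> y \<in> subfield_of_order r \<Longrightarrow> x * y \<in> subfield_of_order r"
  by (simp add: subfield_of_order_def power_mult_distrib)

lemma subfield_of_order_divide:
  "x \<in> subfield_of_order r \<Longrightarrow> y \<in> subfield_of_order r \<Longrightarrow> x / y \<in> subfield_of_order r"
  by (simp add: subfield_of_order_def power_divide)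

lemma power_power_eq_self_if_in_subfield_of_order:
  "a \<in> subfield_of_order r \<Longrightarrow> a ^ (r ^ i) = a"
  by (induction i) (simp_all add: subfield_of_order_def power_mult)

subsection \<open>Fibres of additive maps\<close>

lemma le_le_mult_eq_imp_eq:
  fixes a b c d :: nat
  assumes "a \<le> c" "b \<le> d" "a * b = c * d" "0 < c" "0 < d"
  shows "a = c \<and> b = d"
proof -
  have "a * b \<le> a * d" "a * d \<le> c * d"
    using assms(1,2) by simp_all
  then have "a * d = c * d"
    using assms(3) by linarith
  then have "a = c"
    using assms(5) by simp
  with assms show ?thesis by simp
qed

lemma card_fibre_additive:
  fixes f :: "'a::{finite,ab_group_add} \<Rightarrow> 'b::ab_group_add"
  assumes add: "\<And>x y. f (x + y) = f x + f y" and "b \<in> range f"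
  shows "card (f -` {b}) = card (f -` {0})"
proof -
  obtain y where b: "b = f y" using assms(2) by blast
  have diff: "f (x - y) = f x - f y" for x
    using add[of "x - y" y] by (simp add: algebra_simps)
  have "f -` {b} = (+) y ` (f -` {0})"
  proof
    show "f -` {b} \<subseteq> (+) y ` (f -` {0})"
    proof
      fix x assume "x \<in> f -` {b}"
      then have "x - y \<in> f -` {0}" by (simp add: b diff)
      then show "x \<in> (+) y ` (f -` {0})" by (rule rev_image_eqI) simp
    qed
  qed (auto simp: add b)
  then show ?thesis
    by (simp add: card_image)
qed

lemma card_UNIV_eq_card_range_mult_card_kernel:
  fixes f :: "'a::{finite,ab_group_add} \<Rightarrow> 'b::ab_group_add"
  assumes add: "\<And>x y. f (x + y) = f x + f y"
  shows "card (UNIV :: 'a set) = card (range f) * card (f -` {0})"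
proof -
  have "(UNIV :: 'a set) = (\<Union>b\<in>range f. f -` {b})"
    by auto
  then have "card (UNIV :: 'a set) = card (\<Union>b\<in>range f. f -` {b})"
    by simp
  also have "\<dots> = (\<Sum>b\<in>range f. card (f -` {b}))"
    by (rule card_UN_disjoint) auto
  also have "\<dots> = (\<Sum>b\<in>range f. card (f -` {0}))"
    using card_fibre_additive[OF add] by (intro sum.cong) auto
  finally show ?thesis by simp
qed

subsection \<open>Multiplicative characters\<close>

lemma mult_charD:
  "mult_char \<phi> \<Longrightarrow> x \<noteq> 0 \<Longrightarrow> y \<noteq> 0 \<Longrightarrow> \<phi> (x * y) = \<phi> x * \<phi> y"
  "mult_char \<phi> \<Longrightarrow> x \<noteq> 0 \<Longrightarrow> \<phi> x \<noteq> 0"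
  unfolding mult_char_def by blast+

lemma mult_char_one: "mult_char \<phi> \<Longrightarrow> \<phi> (1::'a::field) = 1"
  using mult_charD(1)[of \<phi> 1 1] mult_charD(2)[of \<phi> 1] by simp

lemma mult_char_power: "mult_char \<phi> \<Longrightarrow> (x::'a::field) \<noteq> 0 \<Longrightarrow> \<phi> (x ^ n) = \<phi> x ^ n"
  by (induction n) (simp_all add: mult_char_one mult_charD)

lemma norm_mult_char:
  assumes \<phi>: "mult_char \<phi>" and x: "(x::'a::{finite,field}) \<noteq> 0"
  shows "cmod (\<phi> x) = 1"
proof -
  define n where "n = card (UNIV :: 'a set) - 1"
  have "n > 0"
    using card_mono[of UNIV "{0::'a, 1}"] by (simp add: n_def)
  have "x * x ^ n = x * 1"
    using finite_field_power_card[of x] finite_UNIV_card_ge_0[where 'a='a]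
    by (simp add: n_def flip: power_Suc)
  then have "\<phi> x ^ n = 1"
    using x mult_char_power[OF \<phi> x, of n] mult_char_one[OF \<phi>] by simp
  then have "cmod (\<phi> x) ^ n = 1 ^ n"
    by (metis norm_one norm_power power_one)
  then show ?thesis
    by (rule power_eq_imp_eq_base) (simp_all add: \<open>n > 0\<close>)
qed

lemma cnj_mult_char:
  assumes \<phi>: "mult_char \<phi>" and y: "(y::'a::{finite,field}) \<noteq> 0"
  shows "cnj (\<phi> y) = \<phi> (inverse y)"
proof -
  have "\<phi> y * cnj (\<phi> y) = 1"
    using complex_norm_square[of "\<phi> y"] norm_mult_char[OF \<phi> y] by simp
  moreover have "\<phi> y * \<phi> (inverse y) = 1"
    using mult_charD(1)[OF \<phi> y, of "inverse y"] y mult_char_one[OF \<phi>] by simp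
  ultimately show ?thesis
    using mult_charD(2)[OF \<phi> y] by (metis mult_left_cancel)
qed

lemma sum_mult_char_eq_0:
  assumes \<phi>: "mult_char \<phi>" and "finite H" and "0 \<notin> H" and g: "g \<in> H" "\<phi> g \<noteq> 1"
    and "\<And>x. x \<in> H \<Longrightarrow> g * x \<in> H" and "\<And>x. x \<in> H \<Longrightarrow> x / g \<in> H"
  shows "(\<Sum>x\<in>H. \<phi> (x::'a::field)) = 0"
proof -
  have "g \<noteq> 0" using g assms(3) by auto
  have "(\<Sum>x\<in>H. \<phi> x) = (\<Sum>x\<in>H. \<phi> (g * x))"
    by (rule sum.reindex_bij_witness[of _ "\<lambda>x. g * x" "\<lambda>x. x / g"])
       (use \<open>g \<noteq> 0\<close> assms in auto)
  also have "\<dots> = \<phi> g * (\<Sum>x\<in>H. \<phi> x)"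
    unfolding sum_distrib_left using assms \<open>g \<noteq> 0\<close> by (intro sum.cong refl mult_charD(1)) auto
  finally have "(\<phi> g - 1) * (\<Sum>x\<in>H. \<phi> x) = 0"
    by (simp add: algebra_simps)
  then show ?thesis using g by simp
qed

lemma sum_mult_char_nonzero_eq_0:
  fixes \<phi> :: "'a::{finite,field} \<Rightarrow> complex"
  assumes \<phi>: "mult_char \<phi>" and "\<not> trivial_char_on (UNIV - {0}) \<phi>"
  shows "(\<Sum>x\<in>UNIV - {0}. \<phi> x) = 0"
proof -
  obtain g where "g \<noteq> 0" "\<phi> g \<noteq> 1"
    using assms(2) by (auto simp: trivial_char_on_def)
  then show ?thesis
    by (intro sum_mult_char_eq_0[OF \<phi>, of _ g]) auto
qed

lemma mult_char_sum_times_cnj: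
  fixes \<phi> :: "'a::{finite,field} \<Rightarrow> complex"
  assumes \<phi>: "mult_char \<phi>" and T: "0 \<notin> T"
  shows "(\<Sum>x\<in>T. \<phi> x) * cnj (\<Sum>x\<in>T. \<phi> x)
           = (\<Sum>u\<in>UNIV - {0}. \<phi> u * of_nat (card {y\<in>T. u * y \<in> T}))"
proof -
  have "(\<Sum>x\<in>T. \<phi> x) * cnj (\<Sum>x\<in>T. \<phi> x) = (\<Sum>x\<in>T. \<Sum>y\<in>T. \<phi> x * cnj (\<phi> y))"
    by (simp add: sum_product)
  also have "\<dots> = (\<Sum>y\<in>T. \<Sum>x\<in>T. \<phi> x * cnj (\<phi> y))"
    by (rule sum.swap)
  also have "\<dots> = (\<Sum>y\<in>T. \<Sum>u\<in>UNIV - {0}. if u * y \<in> T then \<phi> u else 0)"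
  proof (rule sum.cong[OF refl])
    fix y assume "y \<in> T"
    with T have "y \<noteq> 0" by auto
    have "(\<Sum>x\<in>T. \<phi> x * cnj (\<phi> y)) = (\<Sum>x\<in>T. \<phi> (x / y))"
    proof (rule sum.cong[OF refl])
      fix x assume "x \<in> T"
      with T have "x \<noteq> 0" by auto
      with \<open>y \<noteq> 0\<close> show "\<phi> x * cnj (\<phi> y) = \<phi> (x / y)"
        by (simp add: cnj_mult_char[OF \<phi>] mult_charD(1)[OF \<phi>] divide_inverse)
    qed
    also have "\<dots> = (\<Sum>u\<in>{u\<in>UNIV - {0}. u * y \<in> T}. \<phi> u)"
      by (rule sum.reindex_bij_witness[of _ "\<lambda>u. u * y" "\<lambda>x. x / y"]) (use T \<open>y \<noteq> 0\<close> in auto)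
    finally show "(\<Sum>x\<in>T. \<phi> x * cnj (\<phi> y)) = (\<Sum>u\<in>UNIV - {0}. if u * y \<in> T then \<phi> u else 0)"
      using sum.inter_filter[of "UNIV - {0}" \<phi> "\<lambda>u. u * y \<in> T"] by simp
  qed
  also have "\<dots> = (\<Sum>u\<in>UNIV - {0}. \<Sum>y\<in>T. if u * y \<in> T then \<phi> u else 0)"
    by (rule sum.swap)
  also have "\<dots> = (\<Sum>u\<in>UNIV - {0}. \<phi> u * of_nat (card {y\<in>T. u * y \<in> T}))"
  proof (rule sum.cong[OF refl])
    fix u
    show "(\<Sum>y\<in>T. if u * y \<in> T then \<phi> u else 0) = \<phi> u * of_nat (card {y\<in>T. u * y \<in> T})"
      using sum.inter_filter[of T "\<lambda>_. \<phi> u" "\<lambda>y. u * y \<in> T"] by (simp add: mult.commute)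
  qed
  finally show ?thesis .
qed

lemma sum_mult_char_subfield_of_order:
  fixes \<phi> :: "'a::{finite,field} \<Rightarrow> complex"
  assumes "mult_char \<phi>" and "card (subfield_of_order r :: 'a set) = r" and "r > 0"
  shows "(\<Sum>u\<in>subfield_of_order r - {0}. \<phi> u)
           = (if trivial_char_on (subfield_of_order r - {0}) \<phi> then of_nat (r - 1) else 0)"
proof (cases "trivial_char_on (subfield_of_order r - {0}) \<phi>")
  case True
  have "0 \<in> (subfield_of_order r :: 'a set)"
    using assms(3) by (simp add: subfield_of_order_def)
  with True assms(2) show ?thesis
    by (simp add: trivial_char_on_def)
next
  case False
  then obtain g where "g \<in> subfield_of_order r - {0}" "\<phi> g \<noteq> 1"
    by (auto simp: trivial_char_on_def)
  then have "(\<Sum>u\<in>subfield_of_order r - {0}. \<phi> u) = 0"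
    by (intro sum_mult_char_eq_0[OF assms(1), of _ g])
       (auto simp: subfield_of_order_mult subfield_of_order_divide)
  with False show ?thesis
    by simp
qed

subsection \<open>The trace of \<open>F\<^sub>q\<close> over \<open>F\<^sub>r\<close>\<close>

context
  fixes p t s r :: nat and Tr :: "'a::{finite,field} \<Rightarrow> 'a"
  assumes prime_p: "prime p" and t_pos: "t > 0" and s_pos: "s > 0" and r_eq: "r = p ^ t"
    and card_UNIV: "card (UNIV :: 'a set) = r ^ s"
  defines "Tr \<equiv> trace_map r s"
begin

lemma CHAR_eq: "CHAR('a) = p"
  using CHAR_eq_if_card_eq_prime_power[OF prime_p, of "t * s"] card_UNIV r_eq
  by (simp add: power_mult)

lemma two_le_r: "2 \<le> r"
proof -
  have "p ^ 1 \<le> p ^ t"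
    using t_pos prime_gt_0_nat[OF prime_p] by (intro power_increasing) auto
  then show ?thesis
    using r_eq prime_ge_2_nat[OF prime_p] by simp
qed

lemma power_card_eq: "(x :: 'a) ^ (r ^ s) = x"
  using finite_field_power_card[of x] card_UNIV by simp

lemma power_r_power_add: "(x + y :: 'a) ^ (r ^ i) = x ^ (r ^ i) + y ^ (r ^ i)"
  by (rule freshmans_dream') (use CHAR_eq prime_p r_eq in \<open>auto simp: power_mult[symmetric]\<close>)

lemma subfield_of_order_diff:
  assumes "x \<in> subfield_of_order r" and "y \<in> subfield_of_order r"
  shows "(x - y :: 'a) \<in> subfield_of_order r"
proof -
  have "x = (x - y) ^ r + y"
    using power_r_power_add[of "x - y" y 1] assms by (simp add: subfield_of_order_def)
  then show ?thesis by (simp add: subfield_of_order_def eq_diff_eq)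
qed

lemma trace_add: "Tr (x + y) = Tr x + Tr y"
  by (simp add: Tr_def trace_map_def power_r_power_add sum.distrib)

lemma trace_diff: "Tr (x - y) = Tr x - Tr y"
  using trace_add[of "x - y" y] by (simp add: eq_diff_eq)

lemma trace_scale: "a \<in> subfield_of_order r \<Longrightarrow> Tr (a * x) = a * Tr x"
  by (simp add: Tr_def trace_map_def power_mult_distrib sum_distrib_left
      power_power_eq_self_if_in_subfield_of_order)

lemma trace_zero: "Tr 0 = 0"
  using two_le_r by (simp add: Tr_def trace_map_def power_0_left)

lemma trace_minus_one: "Tr (- 1) = - of_nat s"
  using trace_scale[of "- 1" 1] subfield_of_order_diff[of 0 1] two_le_r
  by (simp add: Tr_def trace_map_def subfield_of_order_def)

lemma trace_in_subfield: "Tr x \<in> subfield_of_order r"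
proof -
  obtain s' where s': "s = Suc s'" using s_pos by (cases s) auto
  have "Tr x ^ r = (\<Sum>i<s. (x ^ (r ^ i)) ^ r)"
    unfolding Tr_def trace_map_def
    by (rule freshmans_dream_sum') (use CHAR_eq prime_p r_eq in auto)
  also have "\<dots> = (\<Sum>i<s. x ^ (r ^ Suc i))"
    by (simp add: power_mult[symmetric] mult.commute)
  also have "\<dots> = (\<Sum>i<s'. x ^ (r ^ Suc i)) + x"
    using power_card_eq[of x] by (simp add: s')
  also have "\<dots> = (\<Sum>i<s. x ^ (r ^ i))"
    unfolding s' sum.lessThan_Suc_shift by simp
  finally show ?thesis by (simp add: Tr_def trace_map_def subfield_of_order_def)
qed

lemma card_subfield_le: "card (subfield_of_order r :: 'a set) \<le> r"
proof -
  have "subfield_of_order r = {x::'a. x ^ r + poly [:0, -1:] x = 0}"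
    by (auto simp: subfield_of_order_def)
  then show ?thesis
    using card_roots_power_plus_poly_le[of "[:0, -1:]" r] two_le_r by simp
qed

lemma card_trace_kernel_le: "card (Tr -` {0}) \<le> r ^ (s - 1)"
proof -
  define L :: "'a poly" where "L = (\<Sum>i<s - 1. monom 1 (r ^ i))"
  have "degree L < r ^ (s - 1)"
  proof -
    have "degree L \<le> r ^ (s - 1) - 1"
      unfolding L_def
    proof (rule degree_sum_le)
      fix i assume "i \<in> {..<s - 1}"
      then have "r ^ i < r ^ (s - 1)" using two_le_r by (intro power_strict_increasing) auto
      then show "degree (monom (1::'a) (r ^ i)) \<le> r ^ (s - 1) - 1" by (simp add: degree_monom_eq)
    qed auto
    moreover have "r ^ (s - 1) > 0" using two_le_r by simp
    ultimately show ?thesis by linarith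
  qed
  moreover have "Tr x = x ^ (r ^ (s - 1)) + poly L x" for x
  proof -
    have "Tr x = (\<Sum>i<Suc (s - 1). x ^ (r ^ i))" using s_pos by (simp add: Tr_def trace_map_def)
    then show ?thesis by (simp add: L_def poly_sum poly_monom)
  qed
  ultimately show ?thesis
    using card_roots_power_plus_poly_le[of L "r ^ (s - 1)"] by (simp add: vimage_def)
qed

lemma range_trace_and_card_kernel:
  "range Tr = subfield_of_order r" "card (subfield_of_order r :: 'a set) = r"
  "card (Tr -` {0}) = r ^ (s - 1)"
proof -
  have sub: "range Tr \<subseteq> subfield_of_order r"
    using trace_in_subfield by auto
  then have "card (range Tr) \<le> card (subfield_of_order r :: 'a set)"
    by (intro card_mono) simp_all
  moreover have "card (range Tr) * card (Tr -` {0}) = r * r ^ (s - 1)"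
    using card_UNIV_eq_card_range_mult_card_kernel[OF trace_add] card_UNIV s_pos
    by (simp flip: power_Suc)
  \<comment> \<open>each factor is bounded by the corresponding factor on the right, so both bounds are attained\<close>
  ultimately have "card (range Tr) = r" "card (Tr -` {0}) = r ^ (s - 1)"
    using le_le_mult_eq_imp_eq[of "card (range Tr)" r "card (Tr -` {0})" "r ^ (s - 1)"]
      card_subfield_le card_trace_kernel_le two_le_r by simp_all
  with sub card_subfield_le \<open>card (range Tr) \<le> _\<close>
  show "range Tr = subfield_of_order r" "card (subfield_of_order r :: 'a set) = r"
    "card (Tr -` {0}) = r ^ (s - 1)"
    using card_subset_eq[OF _ sub] by auto
qed

lemma ex_trace_eq_1: "\<exists>y. Tr y = 1"
proof -
  have "1 \<in> range Tr"
    using range_trace_and_card_kernel(1) by (simp add: subfield_of_order_def)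
  then show ?thesis by auto
qed

lemma card_trace_fibre: "c \<in> subfield_of_order r \<Longrightarrow> card {x. Tr x = c} = r ^ (s - 1)"
  using card_fibre_additive[OF trace_add, of c] range_trace_and_card_kernel
  by (simp add: vimage_def)

lemma ex_trace_eq_0_trace_mult_neq_0:
  assumes u: "u \<notin> subfield_of_order r"
  shows "\<exists>z. Tr z = 0 \<and> Tr (u * z) \<noteq> 0"
proof (rule ccontr)
  assume "\<not> ?thesis"
  then have ker: "Tr z = 0 \<Longrightarrow> Tr (u * z) = 0" for z by blast
  obtain y where y: "Tr y = 1"
    using ex_trace_eq_1 by blast
  define \<alpha> where "\<alpha> = Tr (u * y)"
  \<comment> \<open>\<open>w - Tr w * y\<close> lies in the kernel, so \<open>Tr (u * w) = \<alpha> * Tr w = Tr (\<alpha> * w)\<close> for all \<open>w\<close>\<close>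
  have ker_u_\<alpha>: "Tr ((u - \<alpha>) * w) = 0" for w
  proof -
    have "Tr (u * (w - Tr w * y)) = 0"
      by (rule ker) (simp add: trace_diff trace_scale[OF trace_in_subfield] y)
    moreover have "Tr (u * (Tr w * y)) = Tr w * \<alpha>"
      using trace_scale[OF trace_in_subfield, of w "u * y"] by (simp add: \<alpha>_def mult.left_commute)
    moreover have "Tr (\<alpha> * w) = \<alpha> * Tr w"
      unfolding \<alpha>_def by (rule trace_scale[OF trace_in_subfield])
    ultimately have "Tr (u * w) - Tr (\<alpha> * w) = 0"
      by (simp add: right_diff_distrib trace_diff mult.commute)
    then show ?thesis
      by (simp add: left_diff_distrib trace_diff)
  qed
  have "u - \<alpha> \<noteq> 0"
    using u trace_in_subfield[of "u * y"] by (auto simp: \<alpha>_def)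
  then have "(u - \<alpha>) * (y / (u - \<alpha>)) = y"
    by simp
  then show False
    using ker_u_\<alpha>[of "y / (u - \<alpha>)"] y by simp
qed

lemma range_trace_pair:
  assumes u: "u \<notin> subfield_of_order r"
  shows "range (\<lambda>y. (Tr y, Tr (u * y))) = subfield_of_order r \<times> subfield_of_order r"
proof
  show "range (\<lambda>y. (Tr y, Tr (u * y))) \<subseteq> subfield_of_order r \<times> subfield_of_order r"
    using trace_in_subfield by auto
next
  obtain y where y: "Tr y = 1"
    using ex_trace_eq_1 by blast
  obtain z where z: "Tr z = 0" "Tr (u * z) \<noteq> 0"
    using ex_trace_eq_0_trace_mult_neq_0[OF u] by blast
  define \<alpha> \<beta> where "\<alpha> = Tr (u * y)" and "\<beta> = Tr (u * z)"
  show "subfield_of_order r \<times> subfield_of_order r \<subseteq> range (\<lambda>y. (Tr y, Tr (u * y)))"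
  proof clarify
    fix a b :: 'a assume a: "a \<in> subfield_of_order r" and b: "b \<in> subfield_of_order r"
    define \<gamma> where "\<gamma> = (b - a * \<alpha>) / \<beta>"
    have \<gamma>: "\<gamma> \<in> subfield_of_order r"
      unfolding \<gamma>_def \<alpha>_def \<beta>_def
      by (intro subfield_of_order_divide subfield_of_order_diff subfield_of_order_mult a b trace_in_subfield)
    have "Tr (a * y + \<gamma> * z) = a"
      by (simp add: trace_add trace_scale a \<gamma> y z)
    moreover have "Tr (u * (a * y + \<gamma> * z)) = a * \<alpha> + \<gamma> * \<beta>"
      by (simp add: trace_add trace_scale a \<gamma> distrib_left mult.left_commute \<alpha>_def \<beta>_def)
    moreover have "a * \<alpha> + \<gamma> * \<beta> = b"
      using z(2) by (simp add: \<gamma>_def \<beta>_def)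
    ultimately show "(a, b) \<in> range (\<lambda>y. (Tr y, Tr (u * y)))"
      by (intro rev_image_eqI[of "a * y + \<gamma> * z"]) simp_all
  qed
qed

lemma card_trace_pair_fibre:
  assumes "u \<notin> subfield_of_order r" and "c \<in> subfield_of_order r" and "d \<in> subfield_of_order r"
  shows "card {y. Tr y = c \<and> Tr (u * y) = d} * r ^ 2 = r ^ s"
proof -
  define g where "g = (\<lambda>y. (Tr y, Tr (u * y)))"
  have g_add: "g (x + y) = g x + g y" for x y
    by (simp add: g_def trace_add distrib_left)
  have range_g: "range g = subfield_of_order r \<times> subfield_of_order r"
    unfolding g_def by (rule range_trace_pair[OF assms(1)])
  have "card (range g) = r ^ 2"
    using range_trace_and_card_kernel(2) by (simp add: range_g card_cartesian_product power2_eq_square)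
  moreover have "card (g -` {(c, d)}) = card (g -` {0})"
    using assms(2,3) by (intro card_fibre_additive[OF g_add]) (simp add: range_g)
  moreover have "g -` {(c, d)} = {y. Tr y = c \<and> Tr (u * y) = d}"
    by (auto simp: g_def)
  ultimately show ?thesis
    using card_UNIV_eq_card_range_mult_card_kernel[OF g_add] card_UNIV by (simp add: mult.commute)
qed

lemma card_trace_pair_fibre_subfield:
  assumes "u \<in> subfield_of_order r" and "c \<in> subfield_of_order r" and "c \<noteq> 0"
  shows "card {y. Tr y = c \<and> Tr (u * y) = c} = (if u = 1 then r ^ (s - 1) else 0)"
proof (cases "u = 1")
  case True
  then show ?thesis using card_trace_fibre[OF assms(2)] by simp
next
  case False
  have "Tr (u * y) = u * Tr y" for y
    using assms(1) by (rule trace_scale)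
  then have "{y. Tr y = c \<and> Tr (u * y) = c} = {}"
    using False assms(3) by auto
  with False show ?thesis by simp
qed

lemma norm_square_trace_fibre_char_sum:
  fixes \<phi> :: "'a \<Rightarrow> complex"
  assumes \<phi>: "mult_char \<phi>" and nontrivial: "\<not> trivial_char_on (UNIV - {0}) \<phi>"
    and c: "c \<in> subfield_of_order r" "c \<noteq> 0"
  shows "(\<Sum>x | Tr x = c. \<phi> x) * cnj (\<Sum>x | Tr x = c. \<phi> x)
           = of_real (r ^ s / r) - of_real (r ^ s / r ^ 2) * (\<Sum>u\<in>subfield_of_order r - {0}. \<phi> u)"
proof -
  define T where "T = {x. Tr x = c}"
  define F where "F = (subfield_of_order r :: 'a set) - {0}"
  define N where "N u = card {y\<in>T. u * y \<in> T}" for u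
  have "0 \<notin> T" using c trace_zero by (simp add: T_def)
  have N_subfield: "N u = (if u = 1 then r ^ (s - 1) else 0)" if "u \<in> F" for u
    using card_trace_pair_fibre_subfield[of u c] that c by (simp add: N_def T_def F_def)
  have N_outside: "(of_nat (N u) :: complex) = of_real (r ^ s / r ^ 2)" if "u \<notin> subfield_of_order r" for u
  proof -
    have "N u * r ^ 2 = r ^ s"
      using card_trace_pair_fibre[OF that c(1) c(1)] by (simp add: N_def T_def)
    then have "real (N u * r ^ 2) = real (r ^ s)"
      by (rule arg_cong)
    then have "real (N u) = r ^ s / r ^ 2"
      using two_le_r by (simp add: field_simps)
    then show ?thesis
      by (metis of_real_of_nat_eq)
  qed
  have sum_F: "(\<Sum>u\<in>F. \<phi> u * of_nat (N u)) = of_real (r ^ s / r)"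
  proof -
    have "1 \<in> F" using two_le_r by (simp add: F_def subfield_of_order_def)
    have "(\<Sum>u\<in>F. \<phi> u * of_nat (N u)) = (\<Sum>u\<in>F. if u = 1 then of_nat (r ^ (s - 1)) else 0)"
      by (intro sum.cong refl) (simp add: N_subfield mult_char_one[OF \<phi>])
    also have "\<dots> = of_nat (r ^ (s - 1))"
      using \<open>1 \<in> F\<close> by simp
    also have "of_nat (r ^ (s - 1)) = (of_real (r ^ s / r) :: complex)"
      using s_pos two_le_r by (cases s) auto
    finally show ?thesis .
  qed
  have split: "sum f (UNIV - {0}) = sum f F + sum f (UNIV - {0} - F)" for f :: "'a \<Rightarrow> complex"
  proof -
    have "(UNIV - {0}) \<inter> F = F" by (auto simp: F_def)
    then show ?thesis using sum.Int_Diff[of "UNIV - {0}" f F] by simp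
  qed
  have sum_outside: "(\<Sum>u\<in>UNIV - {0} - F. \<phi> u) = - (\<Sum>u\<in>F. \<phi> u)"
    using sum_mult_char_nonzero_eq_0[OF \<phi> nontrivial] unfolding split add_eq_0_iff .
  have "(\<Sum>x\<in>T. \<phi> x) * cnj (\<Sum>x\<in>T. \<phi> x) = (\<Sum>u\<in>UNIV - {0}. \<phi> u * of_nat (N u))"
    unfolding N_def by (rule mult_char_sum_times_cnj[OF \<phi> \<open>0 \<notin> T\<close>])
  also have "\<dots> = (\<Sum>u\<in>F. \<phi> u * of_nat (N u)) + (\<Sum>u\<in>UNIV - {0} - F. \<phi> u * of_nat (N u))"
    by (rule split)
  also have "(\<Sum>u\<in>UNIV - {0} - F. \<phi> u * of_nat (N u)) = of_real (r ^ s / r ^ 2) * (\<Sum>u\<in>UNIV - {0} - F. \<phi> u)"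
    unfolding sum_distrib_left
  proof (intro sum.cong refl)
    fix u assume "u \<in> UNIV - {0} - F"
    then have "u \<notin> subfield_of_order r" by (auto simp: F_def)
    then show "\<phi> u * of_nat (N u) = of_real (r ^ s / r ^ 2) * \<phi> u"
      by (simp add: N_outside mult.commute)
  qed
  finally have "(\<Sum>x\<in>T. \<phi> x) * cnj (\<Sum>x\<in>T. \<phi> x)
      = of_real (r ^ s / r) - of_real (r ^ s / r ^ 2) * (\<Sum>u\<in>F. \<phi> u)"
    by (simp add: sum_F sum_outside)
  then show ?thesis
    by (simp add: T_def F_def)
qed

lemma norm_trace_fibre_char_sum:
  fixes \<phi> :: "'a \<Rightarrow> complex"
  assumes \<phi>: "mult_char \<phi>" and nontrivial: "\<not> trivial_char_on (UNIV - {0}) \<phi>"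
    and c: "c \<in> subfield_of_order r" "c \<noteq> 0"
  shows "cmod (\<Sum>x | Tr x = c. \<phi> x)
           = (if trivial_char_on (subfield_of_order r - {0}) \<phi> then sqrt (r ^ s) / r
              else sqrt (r ^ s) / sqrt r)"
proof -
  define B where "B = (\<Sum>x | Tr x = c. \<phi> x)"
  define S where "S = (\<Sum>u\<in>subfield_of_order r - {0}. \<phi> u)"
  have "complex_of_real (cmod B ^ 2) = of_real (r ^ s / r) - of_real (r ^ s / r ^ 2) * S"
    unfolding complex_norm_square B_def S_def by (rule norm_square_trace_fibre_char_sum[OF assms])
  then have "cmod B ^ 2 = Re (of_real (r ^ s / r) - of_real (r ^ s / r ^ 2) * S)"
    by (metis Re_complex_of_real)
  then have norm_B: "cmod B ^ 2 = r ^ s / r - r ^ s / r ^ 2 * Re S"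
    by simp
  have S: "S = (if trivial_char_on (subfield_of_order r - {0}) \<phi> then of_nat (r - 1) else 0)"
    unfolding S_def using two_le_r
    by (intro sum_mult_char_subfield_of_order[OF \<phi> range_trace_and_card_kernel(2)]) simp
  show ?thesis
  proof (cases "trivial_char_on (subfield_of_order r - {0}) \<phi>")
    case True
    then have "cmod B ^ 2 = r ^ s / r ^ 2"
      using norm_B S two_le_r by (simp add: of_nat_diff field_simps power2_eq_square)
    then have "sqrt (r ^ s / r ^ 2) = cmod B"
      by (rule real_sqrt_unique) simp
    with True show ?thesis
      by (simp add: B_def real_sqrt_divide)
  next
    case False
    then have "cmod B ^ 2 = r ^ s / r"
      using norm_B S by simp
    then have "sqrt (r ^ s / r) = cmod B"
      by (rule real_sqrt_unique) simp
    with False show ?thesis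
      by (simp add: B_def real_sqrt_divide)
  qed
qed

end

theorem mainTheorem5:
  fixes \<phi> :: "'a::{finite,field} \<Rightarrow> complex"
    and p t s r q :: nat
  assumes "prime p" and "odd p" and "t > 0" and "s > 0" and "\<not> p dvd s"
    and "r = p ^ t" and "q = r ^ s" and "card (UNIV :: 'a set) = q"
    and "mult_char \<phi>"
    and "\<not> trivial_char_on (UNIV - {0}) \<phi>"
  shows "let B = (\<Sum>x\<in>{x::'a. x \<noteq> 0 \<and> trace_map r s (x + 1) = 0}. \<phi> x) in
         (\<not> trivial_char_on (subfield_of_order r - {0}) (\<lambda>x. cnj (\<phi> x))
            \<longrightarrow> cmod B = sqrt q / sqrt r)
       \<and> (trivial_char_on (subfield_of_order r - {0}) (\<lambda>x. cnj (\<phi> x))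
            \<longrightarrow> cmod B = sqrt q / r)"
proof -
  \<comment> \<open>the argument does not need \<open>p\<close> to be odd\<close>
  note trace = assms(1,3,4,6) assms(8)[unfolded assms(7)]
  define c where "c = trace_map r s (- 1 :: 'a)"
  have c_in: "c \<in> subfield_of_order r"
    unfolding c_def by (rule trace_in_subfield[OF trace])
  have "c \<noteq> 0"
    using trace_minus_one[OF trace] CHAR_eq[OF trace] assms(5) by (simp add: c_def of_nat_eq_0_iff_char_dvd)
  have "trace_map r s 1 = - c"
    using trace_add[OF trace, of 1 "- 1"] trace_zero[OF trace] by (simp add: c_def eq_neg_iff_add_eq_0)
  then have "trace_map r s (x + 1) = 0 \<longleftrightarrow> trace_map r s x = c" for x :: 'a
    by (simp add: trace_add[OF trace])
  then have "{x::'a. x \<noteq> 0 \<and> trace_map r s (x + 1) = 0} = {x. trace_map r s x = c}"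
    using trace_zero[OF trace] \<open>c \<noteq> 0\<close> by auto
  moreover have "trivial_char_on A (\<lambda>x. cnj (\<phi> x)) \<longleftrightarrow> trivial_char_on A \<phi>" for A
    by (simp add: trivial_char_on_def)
  ultimately show ?thesis
    using norm_trace_fibre_char_sum[OF trace assms(9,10) c_in \<open>c \<noteq> 0\<close>] by (simp add: Let_def assms(7))
qed

end
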